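(* Let $Q\in\mathbb{S}^n$ with $Q_i>0$ for all $i$, and let $\widehat{P}\in\mathbb{S}^n$. Suppose the indices can be labeled so that $\frac{\widehat{P}_\ell}{Q_\ell}<\frac{\widehat{P}_k}{Q_k}\le\frac{\widehat{P}_i}{Q_i}$ for all $i\neq\ell$ (i.e. $\ell$ is the unique index minimizing $\widehat{P}_i/Q_i$ and $k$ attains the second smallest ratio). Then for every $\alpha\in[0,1)$ with $$1-\widehat{P}_\ell-\frac{\widehat{P}_k}{Q_k}(1-Q_\ell)\ \le\ \alpha\ \le\ \kappa(\widehat{P}\,\|\,Q),$$ the vector $$P^*_i=\begin{cases}\dfrac{Q_i\left(1-\frac{\widehat{P}_\ell}{1-\alpha}\right)}{1-Q_\ell}, & i\neq\ell,\\[2mm] \dfrac{\widehat{P}_\ell}{1-\alpha}, & i=\ell,\end{cases}$$ is the unique solution of the optimization problem $$\min_{P\in\mathbb{S}^n}\ \sum_iP_i\log\frac{P_i}{Q_i}\quad\text{subject to}\quad P_i\le\frac{\widehat{P}_i}{1-\alpha},\ i=1,\dots,n.$$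
   Context: $\mathbb{S}^n=\{P\in\mathbb{R}^n:\sum_iP_i=1,\ P_i\ge0\}$. The separation distance is $\kappa(\widehat{P}\|Q)=\max_{i}\left(1-\frac{\widehat{P}_i}{Q_i}\right)$, which here equals $1-\widehat{P}_\ell/Q_\ell$. *)

theory Defs
  imports Complex_Main
begin

text \<open>Probability simplex over a finite index type 'a (playing the role of {1..n}).\<close>
definition simplex :: "('a::finite \<Rightarrow> real) set" where
  "simplex = {P. (\<forall>i. P i \<ge> 0) \<and> (\<Sum>i\<in>UNIV. P i) = 1}"

definition KL :: "('a::finite \<Rightarrow> real) \<Rightarrow> ('a \<Rightarrow> real) \<Rightarrow> real" where
  "KL P Q = (\<Sum>i\<in>UNIV. if P i = 0 then 0 else P i * ln (P i / Q i))"

definition sep_dist :: "('a::finite \<Rightarrow> real) \<Rightarrow> ('a \<Rightarrow> real) \<Rightarrow> real" where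
  "sep_dist Ph Q = Max (range (\<lambda>i. 1 - Ph i / Q i))"

end

theory Submission
  imports Defs
begin

text \<open>
  Only the constraint at \<open>\<ell>\<close> matters: with \<open>p = Ph\<^sub>\<ell>/(1-\<alpha>) \<le> Q\<^sub>\<ell>\<close>, the distribution that
  pins mass \<open>p\<close> on \<open>\<ell>\<close> and rescales \<open>Q\<close> on the other indices minimises \<open>KL(\<cdot>\<parallel>Q)\<close> under
  \<open>P\<^sub>\<ell> \<le> p\<close> alone, and the lower bound on \<open>\<alpha>\<close> makes it satisfy all the other constraints.
  Optimality follows by summing the tangent-line inequalities of the strictly convex
  \<open>x log(x/q)\<close> at \<open>P*\<close>: the linear term is \<open>(P\<^sub>\<ell> - p)(log(p/Q\<^sub>\<ell>) - log g) \<ge> 0\<close>, where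
  \<open>g \<ge> 1\<close> is the rescaling factor.
\<close>

definition kl_term :: "real \<Rightarrow> real \<Rightarrow> real" where
  "kl_term x q = (if x = 0 then 0 else x * ln (x / q))"

lemma KL_eq_sum_kl_term: "KL P Q = (\<Sum>i\<in>UNIV. kl_term (P i) (Q i))"
  by (simp add: KL_def kl_term_def)

lemma kl_term_tangent_less:
  fixes q s x :: real
  assumes "q > 0" "s > 0" "x \<ge> 0" "x \<noteq> s"
  shows "kl_term s q + (x - s) * (1 + ln (s / q)) < kl_term x q"
proof (cases "x = 0")
  case True
  then show ?thesis using assms by (simp add: kl_term_def algebra_simps)
next
  case False
  then have x: "x > 0" using assms(3) by simp
  have "kl_term x q - (kl_term s q + (x - s) * (1 + ln (s / q))) = x * (s / x - 1 - ln (s / x))"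
    using x assms(1,2) by (simp add: kl_term_def ln_div algebra_simps)
  moreover have "ln (s / x) < s / x - 1"
  proof -
    have "s / x \<noteq> 1" using x assms(4) by (simp add: field_simps)
    then show ?thesis
      using ln_le_minus_one[of "s / x"] ln_eq_minus_one[of "s / x"] x assms(2)
      by fastforce
  qed
  then have "0 < x * (s / x - 1 - ln (s / x))" using x by (intro mult_pos_pos) auto
  ultimately show ?thesis by linarith
qed

lemma kl_term_tangent_le:
  fixes q s x :: real
  assumes "q > 0" "s > 0" "x \<ge> 0"
  shows "kl_term s q + (x - s) * (1 + ln (s / q)) \<le> kl_term x q"
  using kl_term_tangent_less[OF assms] by (cases "x = s") auto

lemma KL_less_of_variational_ineq:
  fixes P S Q :: "'a::finite \<Rightarrow> real"
  assumes Q: "\<And>i. Q i > 0" and P: "P \<in> simplex" and S: "S \<in> simplex"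
    and support: "\<And>i. S i = 0 \<Longrightarrow> P i = 0"
    and var: "0 \<le> (\<Sum>i\<in>UNIV. (P i - S i) * ln (S i / Q i))"
    and "P \<noteq> S"
  shows "KL S Q < KL P Q"
proof -
  have P_nonneg: "P i \<ge> 0" and S_nonneg: "S i \<ge> 0" for i
    using P S by (auto simp: simplex_def)
  define T where "T i = kl_term (S i) (Q i) + (P i - S i) * (1 + ln (S i / Q i))" for i
  have T_le: "T i \<le> kl_term (P i) (Q i)" for i
  proof (cases "S i = 0")
    case True
    then show ?thesis using support by (simp add: T_def)
  next
    case False
    then have "S i > 0" using S_nonneg[of i] by simp
    then show ?thesis using kl_term_tangent_le Q P_nonneg unfolding T_def by blast
  qed
  obtain j where j: "P j \<noteq> S j" using \<open>P \<noteq> S\<close> by auto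
  then have "S j \<noteq> 0" using support by force
  then have "S j > 0" using S_nonneg[of j] by simp
  then have "T j < kl_term (P j) (Q j)"
    using kl_term_tangent_less Q P_nonneg j unfolding T_def by blast
  then have "(\<Sum>i\<in>UNIV. T i) < KL P Q"
    unfolding KL_eq_sum_kl_term using T_le by (intro sum_strict_mono_ex1) auto
  moreover have "(\<Sum>i\<in>UNIV. P i - S i) = 0"
    using P S by (simp add: simplex_def sum_subtractf)
  then have "(\<Sum>i\<in>UNIV. T i) = KL S Q + (\<Sum>i\<in>UNIV. (P i - S i) * ln (S i / Q i))"
    by (simp add: T_def KL_eq_sum_kl_term sum.distrib distrib_left)
  ultimately show ?thesis using var by linarith
qed

lemma simplex_lt_one_if_other_pos:
  assumes "Q \<in> simplex" "Q k > 0" "k \<noteq> l"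
  shows "Q l < 1"
proof -
  have "Q l + Q k \<le> (\<Sum>i\<in>UNIV. Q i)"
    using assms sum_mono2[of UNIV "{l, k}" Q] by (simp add: simplex_def)
  then show ?thesis using assms by (simp add: simplex_def)
qed

lemma sep_dist_eq_of_min_ratio:
  assumes "\<And>i. Ph l / Q l \<le> Ph i / Q i"
  shows "sep_dist Ph Q = 1 - Ph l / Q l"
  unfolding sep_dist_def using assms by (intro Max_eqI) auto

lemma sum_pin_rescale:
  fixes Q :: "'a::finite \<Rightarrow> real"
  assumes "(\<Sum>i\<in>UNIV. Q i) = 1" "Q l \<noteq> 1"
  shows "(\<Sum>i\<in>UNIV. if i = l then p else Q i * (1 - p) / (1 - Q l)) = 1"
proof -
  have "(\<Sum>i\<in>UNIV - {l}. Q i) = 1 - Q l"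
    using assms(1) sum.remove[of UNIV l Q] by simp
  then have "(\<Sum>i\<in>UNIV - {l}. Q i * (1 - p) / (1 - Q l)) = 1 - p"
    using assms(2) by (simp add: sum_divide_distrib[symmetric] sum_distrib_right[symmetric])
  then show ?thesis by (simp add: sum.remove[of UNIV l])
qed

lemma pin_rescale_in_simplex:
  fixes Q :: "'a::finite \<Rightarrow> real"
  assumes "Q \<in> simplex" "\<And>i. Q i > 0" "Q l < 1" "0 \<le> p" "p \<le> 1"
  shows "(\<lambda>i. if i = l then p else Q i * (1 - p) / (1 - Q l)) \<in> simplex"
  using assms sum_pin_rescale[of Q l p] unfolding simplex_def
  by (auto simp: order_less_imp_le)

text \<open>
  When \<open>p = 0\<close> the logarithm
  \<open>ln (p / Q l)\<close> takes the junk value \<open>0\<close>, which is harmless since then \<open>P l = p\<close>.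
\<close>

lemma KL_less_pin_rescale:
  fixes P Q :: "'a::finite \<Rightarrow> real"
  assumes Q: "Q \<in> simplex" "\<And>i. Q i > 0" and Ql: "Q l < 1"
    and p: "0 \<le> p" "p \<le> Q l"
    and S_eq: "S = (\<lambda>i. if i = l then p else Q i * (1 - p) / (1 - Q l))"
    and P: "P \<in> simplex" "P l \<le> p" and "P \<noteq> S"
  shows "KL S Q < KL P Q"
proof (rule KL_less_of_variational_ineq[OF Q(2) P(1) _ _ _ \<open>P \<noteq> S\<close>])
  define g where "g = (1 - p) / (1 - Q l)"
  have g: "g \<ge> 1" using p Ql by (simp add: g_def)
  have S_off: "S i = Q i * g" if "i \<noteq> l" for i
    using that by (simp add: S_eq g_def)
  have S_pos: "S i > 0" if "i \<noteq> l" for i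
    using that S_off g Q(2)[of i] by simp
  show "S \<in> simplex"
    unfolding S_eq using Q Ql p by (intro pin_rescale_in_simplex) auto
  show "P i = 0" if "S i = 0" for i
  proof -
    have "i = l" using that S_pos by force
    moreover have "P l \<ge> 0" using P(1) by (simp add: simplex_def)
    ultimately show ?thesis using that P(2) by (simp add: S_eq)
  qed
  have "(\<Sum>i\<in>UNIV. (P i - S i) * ln (S i / Q i))
      = (\<Sum>i\<in>UNIV. (P i - S i) * ln g + (if i = l then (P l - p) * (ln (p / Q l) - ln g) else 0))"
  proof (intro sum.cong refl)
    fix i
    show "(P i - S i) * ln (S i / Q i)
        = (P i - S i) * ln g + (if i = l then (P l - p) * (ln (p / Q l) - ln g) else 0)"
    proof (cases "i = l")
      case False
      then have "S i / Q i = g" using S_off Q(2)[of i] by simp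
      then show ?thesis using False by simp
    qed (simp add: S_eq algebra_simps)
  qed
  also have "\<dots> = (\<Sum>i\<in>UNIV. P i - S i) * ln g + (P l - p) * (ln (p / Q l) - ln g)"
    by (simp add: sum.distrib sum_distrib_right)
  also have "(\<Sum>i\<in>UNIV. P i - S i) = 0"
    using P(1) \<open>S \<in> simplex\<close> by (simp add: simplex_def sum_subtractf)
  finally have var: "(\<Sum>i\<in>UNIV. (P i - S i) * ln (S i / Q i)) = (P l - p) * (ln (p / Q l) - ln g)"
    by simp
  have "ln (p / Q l) \<le> 0"
    using p Q(2)[of l] by (cases "p = 0") auto
  moreover have "0 \<le> ln g" using g by simp
  ultimately show "0 \<le> (\<Sum>i\<in>UNIV. (P i - S i) * ln (S i / Q i))"
    unfolding var using P(2) by (intro mult_nonpos_nonpos) auto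
qed

lemma rescaled_mass_le:
  fixes a b q r x ql :: real
  assumes "b > 0" "q > 0" "ql < 1" "b - a \<le> r * (1 - ql)" "r \<le> x / q"
  shows "q * (1 - a / b) / (1 - ql) \<le> x / b"
proof -
  have "(1 - a / b) / (1 - ql) = (b - a) / (1 - ql) / b"
    using assms(1) by (simp add: field_simps)
  also have "\<dots> \<le> r / b"
    using assms(1,3,4) by (intro divide_right_mono) (auto simp: pos_divide_le_eq)
  also have "\<dots> \<le> x / q / b"
    using assms(1,5) by (intro divide_right_mono) auto
  finally have "q * ((1 - a / b) / (1 - ql)) \<le> q * (x / q / b)"
    using assms(2) by (intro mult_left_mono) auto
  then show ?thesis
    using assms(2) by simp
qed

theorem theorem5:
  fixes Q Ph :: "'a::finite \<Rightarrow> real" and l k :: 'a and \<alpha> :: real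
  assumes "Q \<in> simplex" and "\<forall>i. Q i > 0"
    and "Ph \<in> simplex"
    and "Ph l / Q l < Ph k / Q k"
    and "\<forall>i. i \<noteq> l \<longrightarrow> Ph k / Q k \<le> Ph i / Q i"
    and "0 \<le> \<alpha>" and "\<alpha> < 1"
    and "1 - Ph l - Ph k / Q k * (1 - Q l) \<le> \<alpha>"
    and "\<alpha> \<le> sep_dist Ph Q"
  defines "Pstar \<equiv> (\<lambda>i. if i = l then Ph l / (1 - \<alpha>)
                        else Q i * (1 - Ph l / (1 - \<alpha>)) / (1 - Q l))"
  shows "Pstar \<in> simplex \<and> (\<forall>i. Pstar i \<le> Ph i / (1 - \<alpha>)) \<and>
         (\<forall>P \<in> simplex. (\<forall>i. P i \<le> Ph i / (1 - \<alpha>)) \<longrightarrow> P \<noteq> Pstar \<longrightarrow>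
              KL Pstar Q < KL P Q)"
proof -
  define p where "p = Ph l / (1 - \<alpha>)"
  have Qpos: "\<And>i. Q i > 0" and Ph_nonneg: "\<And>i. Ph i \<ge> 0"
    using assms(2,3) by (auto simp: simplex_def)
  have "k \<noteq> l" using assms(4) by auto
  then have Ql: "Q l < 1" using simplex_lt_one_if_other_pos assms(1) Qpos by blast
  have "sep_dist Ph Q = 1 - Ph l / Q l"
    using assms(4,5) by (intro sep_dist_eq_of_min_ratio) (metis order.strict_implies_order order.trans order_refl)
  then have "\<alpha> * Q l \<le> (1 - Ph l / Q l) * Q l"
    using assms(9) Qpos[of l] by (intro mult_right_mono) auto
  then have "\<alpha> * Q l \<le> Q l - Ph l"
    using Qpos[of l] by (simp add: algebra_simps)
  then have p: "0 \<le> p" "p \<le> Q l"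
    using assms(7) Ph_nonneg[of l] by (auto simp: p_def field_simps)
  have Pstar_eq: "Pstar = (\<lambda>i. if i = l then p else Q i * (1 - p) / (1 - Q l))"
    unfolding Pstar_def p_def ..
  have "P l \<le> p \<Longrightarrow> P \<in> simplex \<Longrightarrow> P \<noteq> Pstar \<Longrightarrow> KL Pstar Q < KL P Q" for P
    using KL_less_pin_rescale[OF assms(1) Qpos Ql p Pstar_eq] by blast
  moreover have "Pstar i \<le> Ph i / (1 - \<alpha>)" for i
  proof (cases "i = l")
    case False
    then show ?thesis
      using assms(5,7,8) Qpos Ql
      by (auto simp: Pstar_def intro!: rescaled_mass_le[where r = "Ph k / Q k"])
  qed (simp add: Pstar_def)
  moreover have "Pstar \<in> simplex"
    unfolding Pstar_eq using assms(1) Qpos Ql p by (intro pin_rescale_in_simplex) auto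
  ultimately show ?thesis by (simp add: p_def)
qed

end
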